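(* Let $X\in\mathbb{R}^{n\times p}$, $y\in\mathbb{R}^n$, $\beta\in\mathbb{R}^p$ with $s=|S|\ge 1$, and put $\epsilon=y-X\beta$. Let $\lambda,\rho_1,\rho_2\ge 0$, $\tau\in[0,1)$, and let $\widehat\beta^{\tau}$ be a minimizer of $\beta'\mapsto V_\tau(\beta')$ (for $\tau=0$, of $V_0$). Suppose $1\le\max(q_R,\widehat s^{\tau})\le p$ and $\kappa_n+\lambda n^{-1}>0$. Then $$\|\widehat\beta^{\tau}-\beta\|_2\le\frac{q_R^{1/2}}{\kappa_n+\lambda n^{-1}}\left\{4\Big[1+\Big(\frac{\widehat s^{\tau}}{4s}\Big)^{1/2}\Big]\frac{\|X^T\epsilon\|_\infty}{n}+2\max_{j\in S}|\beta_j|\frac{\lambda}{n}+\Big[\frac{2c_2^{-1}+1}{\log(\tau^{-1})}+c_3^{-1}\Big]\frac{\rho_1+\rho_2}{n}\right\},$$ where $\kappa_n=n^{-1}\min_{\|w\|_2=1}w^TX^TXw$, $c_2=\min_{j\in\widehat S^{\tau}}|\widehat\beta^{\tau}_j|$, $c_3=\min_{j\in S}|\beta_j|$, and for $\tau=0$ the term $1/\log(\tau^{-1})$ is read as $0$.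
   Context: Groups: $G_1,\dots,G_m$ are pairwise disjoint nonempty subsets of $\{1,\dots,p\}$ whose union is $\{1,\dots,p\}$, with sizes $q_k=|G_k|$; $\beta_{G_k}$ (resp. $X_{G_k}$) denotes the subvector of $\beta$ (resp. the columns of $X$) indexed by $G_k$. For $\tau\in(0,1)$ define $$V_\tau(\beta')=\|y-X\beta'\|_2^2+\lambda\|\beta'\|_2^2+\rho_1\sum_{j=1}^p\frac{\log(1+\tau^{-1}|\beta'_j|)}{\log(1+\tau^{-1})}+\rho_2\sum_{k=1}^m\sqrt{q_k}\,\frac{\log(1+\tau^{-1}\|\beta'_{G_k}\|_2)}{\log(1+\tau^{-1})},$$ and $V_0(\beta')=\lim_{\tau\to0}V_\tau(\beta')=\|y-X\beta'\|_2^2+\lambda\|\beta'\|_2^2+\rho_1\#\{j:\beta'_j\neq0\}+\rho_2\sum_k\sqrt{q_k}\,\mathbb{I}\{\|\beta'_{G_k}\|_2\neq0\}$ (a minimizer of $V_0$ is called the gvsnss estimator). $\widehat S^{\tau}=\{j:\widehat\beta^{\tau}_j\ne0\}$, $\widehat s^{\tau}=|\widehat S^{\tau}|$. For the (true) vector $\beta$: $S=\{j:\beta_j\neq0\}$, $R=\{k:\|\beta_{G_k}\|_2\neq0\}$ (the groups covering $S$), $G_R=\bigcup_{k\in R}G_k$, $q_R=|G_R|=\sum_{k\in R}q_k$. *)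

theory Defs
  imports "HOL-Analysis.Analysis"
begin

text \<open>Vectors in R^p are real^'p, data matrix X in R^{n x p} is real^'p^'n
  (rows indexed by 'n); n = CARD('n), p = CARD('p).\<close>

definition is_group_partition :: "'p set set \<Rightarrow> bool" where
  "is_group_partition \<G> \<longleftrightarrow> disjoint \<G> \<and> {} \<notin> \<G> \<and> \<Union>\<G> = UNIV"

definition supp :: "real^'p \<Rightarrow> 'p set" where
  "supp b = {j. b$j \<noteq> 0}"

definition group_norm :: "real^'p \<Rightarrow> 'p set \<Rightarrow> real" where
  "group_norm b G = sqrt (\<Sum>j\<in>G. (b$j)^2)"

text \<open>V_tau for tau in (0,1) (natural logarithm; the base cancels in the ratio).\<close>
definition Vtau :: "real^'p^'n \<Rightarrow> real^'n \<Rightarrow> 'p set set \<Rightarrow> real \<Rightarrow> real \<Rightarrow> real \<Rightarrow> real \<Rightarrow> real^'p \<Rightarrow> real" where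
  "Vtau X y \<G> lam \<rho>1 \<rho>2 \<tau> b =
     (norm (y - X *v b))^2 + lam * (norm b)^2
     + \<rho>1 * (\<Sum>j\<in>UNIV. ln (1 + \<bar>b$j\<bar> / \<tau>) / ln (1 + 1/\<tau>))
     + \<rho>2 * (\<Sum>G\<in>\<G>. sqrt (real (card G)) * (ln (1 + group_norm b G / \<tau>) / ln (1 + 1/\<tau>)))"

definition V0 :: "real^'p^'n \<Rightarrow> real^'n \<Rightarrow> 'p set set \<Rightarrow> real \<Rightarrow> real \<Rightarrow> real \<Rightarrow> real^'p \<Rightarrow> real" where
  "V0 X y \<G> lam \<rho>1 \<rho>2 b =
     (norm (y - X *v b))^2 + lam * (norm b)^2
     + \<rho>1 * real (card (supp b))
     + \<rho>2 * (\<Sum>G\<in>\<G>. sqrt (real (card G)) * (if group_norm b G \<noteq> 0 then 1 else 0))"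

definition Vobj :: "real^'p^'n \<Rightarrow> real^'n \<Rightarrow> 'p set set \<Rightarrow> real \<Rightarrow> real \<Rightarrow> real \<Rightarrow> real \<Rightarrow> real^'p \<Rightarrow> real" where
  "Vobj X y \<G> lam \<rho>1 \<rho>2 \<tau> b =
     (if \<tau> = 0 then V0 X y \<G> lam \<rho>1 \<rho>2 b else Vtau X y \<G> lam \<rho>1 \<rho>2 \<tau> b)"

definition qR :: "'p set set \<Rightarrow> real^'p \<Rightarrow> nat" where
  "qR \<G> b = card (\<Union>{G\<in>\<G>. group_norm b G \<noteq> 0})"

text \<open>kappa_n = n^{-1} min over unit w of w^T X^T X w (the min is attained; written as Inf).\<close>
definition kappa :: "real^'p^'n \<Rightarrow> real" where
  "kappa X = (1 / real CARD('n)) * Inf {w \<bullet> ((transpose X ** X) *v w) | w. norm w = 1}"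

definition supnorm :: "real^'m \<Rightarrow> real" where
  "supnorm v = Max (range (\<lambda>i. \<bar>v$i\<bar>))"

end

theory Submission
  imports Defs
begin

(* Write d = bhat - beta.  Minimality of
   bhat compared with the competitor beta gives
     |X d|^2 + lam |d|^2 <= 2 <X^T eps, d> - 2 lam <beta, d> + pen(beta) - pen(bhat).
   The left side is at least (n kappa + lam) |d|^2.  On the right:
   the noise term is at most |X^T eps|_inf sqrt(s + shat) |d| because d lives on
   supp beta and supp bhat; the ridge term is at most sqrt s max|beta_j| |d|;
   and, the crucial step, the penalty difference is Lipschitz in d with constant
   (rho1 + rho2) sqrt q_R C, where C is the slope constant of the theorem.  This
   last fact rests on a one-dimensional estimate for the logarithmic penalty
   profile, applied coordinatewise and groupwise (with Cauchy-Schwarz over the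
   active groups).  Dividing by |d| and some real arithmetic give the claim. *)

subsection \<open>The logarithmic penalty profile\<close>

text \<open>One-dimensional penalty: the capped indicator for tau = 0 and the
  normalised logarithm otherwise; both objectives are sums of this profile.\<close>
definition logpen :: "real \<Rightarrow> real \<Rightarrow> real" where
  "logpen \<tau> t = (if \<tau> = 0 then (if t \<noteq> 0 then 1 else 0) else ln (1 + t/\<tau>) / ln (1 + 1/\<tau>))"

text \<open>The profile vanishes at 0 and is nonnegative, so coordinates and groups that are
  zero in beta can only increase the penalty when passing to bhat.\<close>
lemma logpen_0 [simp]: "logpen \<tau> 0 = 0"
  by (simp add: logpen_def)

lemma logpen_nonneg: "0 \<le> \<tau> \<Longrightarrow> 0 \<le> t \<Longrightarrow> 0 \<le> logpen \<tau> t"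
  by (auto simp: logpen_def intro!: divide_nonneg_nonneg)

lemma ln_inverse_le_normaliser:
  fixes \<tau> :: real
  assumes "0 < \<tau>" "\<tau> < 1"
  shows "0 < ln (1/\<tau>)" "ln (1/\<tau>) \<le> ln (1 + 1/\<tau>)"
proof -
  have "1 < 1/\<tau>" using assms by (simp add: less_divide_eq_1)
  then show "0 < ln (1/\<tau>)" by (rule ln_gt_zero)
  show "ln (1/\<tau>) \<le> ln (1 + 1/\<tau>)" using assms by (subst ln_le_cancel_iff) (auto intro: add_pos_pos)
qed

lemma logpen_le_linear:
  assumes tau: "0 < \<tau>" "\<tau> < 1" and a: "0 \<le> a"
  shows "logpen \<tau> a \<le> 1 + a / ln (1/\<tau>)"
proof -
  define L where "L = ln (1 + 1/\<tau>)"
  have L: "0 < ln (1/\<tau>)" "ln (1/\<tau>) \<le> L"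
    using ln_inverse_le_normaliser[OF tau] by (auto simp: L_def)
  have "ln (1 + a/\<tau>) \<le> ln ((1 + 1/\<tau>) * (1 + a))"
    using tau a by (subst ln_le_cancel_iff) (auto simp: field_simps intro!: add_pos_nonneg)
  also have "\<dots> = L + ln (1 + a)"
  proof -
    have "0 < 1 + 1/\<tau>" "0 < 1 + a" using tau a by (auto intro: add_pos_pos)
    then show ?thesis by (simp add: L_def ln_mult)
  qed
  also have "ln (1 + a) \<le> a"
    using a by (simp add: ln_add_one_self_le_self)
  finally have "logpen \<tau> a \<le> 1 + a / L"
    using tau L by (simp add: logpen_def L_def divide_simps)
  also have "a / L \<le> a / ln (1/\<tau>)"
    using a L by (simp add: frac_le)
  finally show ?thesis by simp
qed

text \<open>Increment away from zero: a Lipschitz bound with constant 1/(b ln(1/tau)),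
  from ln x \<le> x - 1 applied to the ratio (tau + a)/(tau + b).\<close>
lemma logpen_increment_le:
  assumes tau: "0 < \<tau>" "\<tau> < 1" and b: "0 < b" and a: "0 \<le> a"
  shows "logpen \<tau> a - logpen \<tau> b \<le> \<bar>a - b\<bar> / (b * ln (1/\<tau>))"
proof -
  define L where "L = ln (1 + 1/\<tau>)"
  have L: "0 < ln (1/\<tau>)" "ln (1/\<tau>) \<le> L"
    using ln_inverse_le_normaliser[OF tau] by (auto simp: L_def)
  have ratio: "(1 + a/\<tau>) / (1 + b/\<tau>) = (\<tau> + a) / (\<tau> + b)"
    using tau by (simp add: divide_simps)
  have "ln (1 + a/\<tau>) - ln (1 + b/\<tau>) = ln ((\<tau> + a) / (\<tau> + b))"
  proof -
    have "0 < 1 + a/\<tau>" "0 < 1 + b/\<tau>" using tau a b by (auto intro: add_pos_nonneg)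
    then show ?thesis unfolding ratio[symmetric] by (simp add: ln_div)
  qed
  also have "\<dots> \<le> (\<tau> + a) / (\<tau> + b) - 1"
    using tau a b by (intro ln_le_minus_one) auto
  also have "\<dots> = (a - b) / (\<tau> + b)"
    using tau b by (simp add: field_simps)
  also have "\<dots> \<le> \<bar>a - b\<bar> / b"
    using tau b by (intro frac_le) auto
  finally have num: "ln (1 + a/\<tau>) - ln (1 + b/\<tau>) \<le> \<bar>a - b\<bar> / b" .
  have "logpen \<tau> a - logpen \<tau> b = (ln (1 + a/\<tau>) - ln (1 + b/\<tau>)) / L"
    using tau by (simp add: logpen_def L_def diff_divide_distrib)
  also have "\<dots> \<le> (\<bar>a - b\<bar> / b) / L"
    using num L by (intro divide_right_mono) auto
  also have "\<dots> \<le> (\<bar>a - b\<bar> / b) / ln (1/\<tau>)"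
    using L b by (intro divide_left_mono) auto
  finally show ?thesis by simp
qed

lemma logpen_drop_le:
  assumes tau: "0 \<le> \<tau>" "\<tau> < 1" and c3: "0 < c3" "c3 \<le> a" and b: "0 \<le> b"
    and c2i: "0 \<le> c2i" "b \<noteq> 0 \<Longrightarrow> 1 \<le> b * c2i"
  shows "logpen \<tau> a - logpen \<tau> b
           \<le> ((2 * c2i + 1) * (if \<tau> = 0 then 0 else 1 / ln (1/\<tau>)) + 1/c3) * \<bar>a - b\<bar>"
proof -
  define T where "T = (if \<tau> = 0 then 0 else 1 / ln (1/\<tau>))"
  have T: "0 \<le> T" using tau by (auto simp: T_def)
  have a: "0 < a" using c3 by linarith
  have a_over: "1 \<le> a / c3" using c3 by simp
  have "logpen \<tau> a - logpen \<tau> b \<le> ((2 * c2i + 1) * T + 1/c3) * \<bar>a - b\<bar>"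
  proof (cases "\<tau> = 0")
    case True
    have "0 \<le> ((2 * c2i + 1) * T + 1/c3) * \<bar>a - b\<bar>"
      using c2i c3 T by simp
    moreover have "a / c3 \<le> ((2 * c2i + 1) * T + 1/c3) * a"
      using c2i T a by (simp add: algebra_simps)
    ultimately show ?thesis
      using True a a_over b by (cases "b = 0") (auto simp: logpen_def)
  next
    case False
    then have tau': "0 < \<tau>" "\<tau> < 1" and Tv: "T = 1 / ln (1/\<tau>)"
      using tau by (auto simp: T_def)
    show ?thesis
    proof (cases "b = 0")
      case True
      have "logpen \<tau> a - logpen \<tau> b \<le> a/c3 + a * T"
        using logpen_le_linear[OF tau' a[THEN less_imp_le]] a_over True Tv by simp
      also have "\<dots> \<le> ((2 * c2i + 1) * T + 1/c3) * \<bar>a - b\<bar>"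
        using True T c2i a by (simp add: algebra_simps)
      finally show ?thesis .
    next
      case False
      then have bpos: "0 < b" using b by simp
      have inv_b: "1 / b \<le> c2i" using c2i(2)[OF False] bpos by (simp add: field_simps)
      have "logpen \<tau> a - logpen \<tau> b \<le> (1 / b) * T * \<bar>a - b\<bar>"
        using logpen_increment_le[OF tau' bpos a[THEN less_imp_le]] Tv by simp
      also have "\<dots> \<le> ((2 * c2i + 1) * T + 1/c3) * \<bar>a - b\<bar>"
      proof (rule mult_right_mono)
        have "(1 / b) * T \<le> c2i * T" using inv_b T by (rule mult_right_mono)
        moreover have "0 \<le> c2i * T" "0 \<le> 1/c3" "0 \<le> T" using c2i T c3 by simp_all
        moreover have "(2 * c2i + 1) * T = 2 * (c2i * T) + T" by (simp add: algebra_simps)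
        ultimately show "(1 / b) * T \<le> (2 * c2i + 1) * T + 1/c3" by linarith
      qed simp
      finally show ?thesis .
    qed
  qed
  then show ?thesis by (simp add: T_def)
qed

text \<open>The constants c2, c3 of the theorem: smallest nonzero entry in absolute value,
  and the largest one (used for the ridge term).\<close>
definition min_abs :: "real^'p \<Rightarrow> real" where
  "min_abs b = Min ((\<lambda>j. \<bar>b$j\<bar>) ` supp b)"

definition max_abs :: "real^'p \<Rightarrow> real" where
  "max_abs b = Max ((\<lambda>j. \<bar>b$j\<bar>) ` supp b)"

lemma min_abs_le: "j \<in> supp b \<Longrightarrow> min_abs b \<le> \<bar>b$j\<bar>"
  unfolding min_abs_def by (intro Min_le) auto

lemma min_abs_pos: "supp b \<noteq> {} \<Longrightarrow> 0 < min_abs b"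
proof -
  assume "supp b \<noteq> {}"
  then have "min_abs b \<in> (\<lambda>j. \<bar>b$j\<bar>) ` supp b" unfolding min_abs_def by (intro Min_in) auto
  then show ?thesis by (auto simp: supp_def)
qed

lemma abs_le_max_abs: "j \<in> supp b \<Longrightarrow> \<bar>b$j\<bar> \<le> max_abs b"
  unfolding max_abs_def by (intro Max_ge) auto

lemma max_abs_nonneg: "supp b \<noteq> {} \<Longrightarrow> 0 \<le> max_abs b"
  using abs_le_max_abs by (meson abs_ge_zero ex_in_conv order_trans)

lemma supp_diff_subset: "supp (a - b) \<subseteq> supp a \<union> supp b"
  by (auto simp: supp_def)

definition slope :: "real \<Rightarrow> real^'p \<Rightarrow> real^'p \<Rightarrow> real" where
  "slope \<tau> \<beta> bhat = (2 * (if supp bhat = {} then 0 else 1 / min_abs bhat) + 1)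
                        * (if \<tau> = 0 then 0 else 1 / ln (1 / \<tau>)) + 1 / min_abs \<beta>"

lemma slope_nonneg:
  assumes "0 \<le> \<tau>" "\<tau> < 1" "supp \<beta> \<noteq> {}"
  shows "0 \<le> slope \<tau> \<beta> bhat"
proof -
  have "0 \<le> (if \<tau> = 0 then 0 else 1 / ln (1 / \<tau>))"
    using assms ln_inverse_le_normaliser[of \<tau>] by auto
  moreover have "0 \<le> (if supp bhat = {} then 0 else 1 / min_abs bhat)"
    by (cases "supp bhat = {}") (simp_all add: min_abs_pos less_imp_le)
  ultimately show ?thesis
    using min_abs_pos[OF assms(3)] unfolding slope_def by simp
qed

lemma logpen_drop_slope:
  assumes tau: "0 \<le> \<tau>" "\<tau> < 1" and S: "supp \<beta> \<noteq> {}"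
    and a: "min_abs \<beta> \<le> a" and b: "0 \<le> b"
    and b_dom: "b \<noteq> 0 \<Longrightarrow> \<exists>j\<in>supp bhat. \<bar>bhat$j\<bar> \<le> b"
  shows "logpen \<tau> a - logpen \<tau> b \<le> slope \<tau> \<beta> bhat * \<bar>a - b\<bar>"
proof -
  define c2i where "c2i = (if supp bhat = {} then 0 else 1 / min_abs bhat)"
  have c2i: "0 \<le> c2i"
    by (cases "supp bhat = {}") (simp_all add: c2i_def min_abs_pos less_imp_le)
  have "1 \<le> b * c2i" if b_nz: "b \<noteq> 0"
  proof -
    obtain j where j: "j \<in> supp bhat" "\<bar>bhat$j\<bar> \<le> b" using b_dom[OF b_nz] by blast
    then have "0 < min_abs bhat" "min_abs bhat \<le> b"
      using min_abs_pos[of bhat] min_abs_le[of j bhat] by auto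
    then show ?thesis using j(1) by (auto simp: c2i_def field_simps)
  qed
  with logpen_drop_le[OF tau min_abs_pos[OF S] a b c2i]
  show ?thesis by (simp add: slope_def c2i_def)
qed

lemma group_norm_L2: "group_norm b G = L2_set (\<lambda>j. b$j) G"
  by (simp add: group_norm_def L2_set_def)

lemma group_norm_nonneg: "0 \<le> group_norm b G"
  by (simp add: group_norm_L2)

lemma abs_le_group_norm: "j \<in> G \<Longrightarrow> \<bar>b$j\<bar> \<le> group_norm b G"
  using member_le_L2_set[of G j "\<lambda>j. \<bar>b$j\<bar>"] by (simp add: group_norm_L2 L2_set_def)

lemma group_norm_eq_0_iff: "group_norm b G = 0 \<longleftrightarrow> (\<forall>j\<in>G. b$j = 0)"
  by (simp add: group_norm_L2 L2_set_eq_0_iff)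

lemma group_norm_diff_le: "\<bar>group_norm a G - group_norm b G\<bar> \<le> group_norm (b - a) G"
proof -
  have "group_norm b G \<le> group_norm a G + group_norm (b - a) G"
    using L2_set_triangle_ineq[of "\<lambda>j. a$j" "\<lambda>j. (b - a)$j" G] by (simp add: group_norm_L2)
  moreover have "group_norm a G \<le> group_norm b G + group_norm (a - b) G"
    using L2_set_triangle_ineq[of "\<lambda>j. b$j" "\<lambda>j. (a - b)$j" G] by (simp add: group_norm_L2)
  moreover have "group_norm (a - b) G = group_norm (b - a) G"
    by (simp add: group_norm_def power2_commute)
  ultimately show ?thesis by linarith
qed

lemma sum_group_norm_sq:
  assumes "is_group_partition \<G>"
  shows "(\<Sum>G\<in>\<G>. (group_norm d G)\<^sup>2) = (norm d)\<^sup>2"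
proof -
  have disj: "pairwise disjnt \<G>" and cover: "\<Union>\<G> = UNIV"
    using assms by (auto simp: is_group_partition_def disjoint_def pairwise_def disjnt_def)
  have fin: "finite \<G>" by (rule finite_subset[OF subset_UNIV]) simp
  have "(\<Sum>G\<in>\<G>. (group_norm d G)\<^sup>2) = (\<Sum>G\<in>\<G>. \<Sum>j\<in>G. (d$j)\<^sup>2)"
    by (simp add: group_norm_def sum_nonneg)
  also have "\<dots> = (\<Sum>j\<in>\<Union>\<G>. (d$j)\<^sup>2)"
    using disj fin by (subst sum.Union_disjoint) (auto simp: pairwise_def disjnt_def)
  also have "\<dots> = (norm d)\<^sup>2"
    using cover by (simp add: norm_vec_def L2_set_def sum_nonneg)
  finally show ?thesis .
qed

lemma supp_subset_active_groups:
  assumes "is_group_partition \<G>"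
  shows "supp \<beta> \<subseteq> \<Union>{G\<in>\<G>. group_norm \<beta> G \<noteq> 0}"
proof
  fix j assume j: "j \<in> supp \<beta>"
  have "j \<in> \<Union>\<G>" using assms by (simp add: is_group_partition_def)
  then obtain G where G: "G \<in> \<G>" "j \<in> G" by auto
  then have "group_norm \<beta> G \<noteq> 0" using j by (auto simp: group_norm_eq_0_iff supp_def)
  with G show "j \<in> \<Union>{G\<in>\<G>. group_norm \<beta> G \<noteq> 0}" by blast
qed

lemma card_supp_le_qR: "is_group_partition \<G> \<Longrightarrow> card (supp \<beta>) \<le> qR \<G> \<beta>"
  unfolding qR_def by (rule card_mono[OF _ supp_subset_active_groups]) simp_all

lemma qR_eq_sum_card:
  assumes "is_group_partition \<G>"
  shows "qR \<G> \<beta> = (\<Sum>G\<in>{G\<in>\<G>. group_norm \<beta> G \<noteq> 0}. card G)"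
  unfolding qR_def using assms
  by (intro card_Union_disjoint) (auto simp: is_group_partition_def disjoint_def pairwise_def disjnt_def)

subsection \<open>The penalty and its Lipschitz bound\<close>

definition pen :: "real \<Rightarrow> 'p set set \<Rightarrow> real \<Rightarrow> real \<Rightarrow> real^'p \<Rightarrow> real" where
  "pen \<tau> \<G> \<rho>1 \<rho>2 b = \<rho>1 * (\<Sum>j\<in>UNIV. logpen \<tau> \<bar>b$j\<bar>)
     + \<rho>2 * (\<Sum>G\<in>\<G>. sqrt (real (card G)) * logpen \<tau> (group_norm b G))"

lemma Vobj_eq_pen:
  "Vobj X y \<G> lam \<rho>1 \<rho>2 \<tau> b = (norm (y - X *v b))\<^sup>2 + lam * (norm b)\<^sup>2 + pen \<tau> \<G> \<rho>1 \<rho>2 b"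
proof (cases "\<tau> = 0")
  case True
  have "real (card (supp b)) = (\<Sum>j\<in>UNIV. logpen \<tau> \<bar>b$j\<bar>)"
    using True by (simp add: logpen_def supp_def sum.If_cases)
  with True show ?thesis by (simp add: Vobj_def V0_def pen_def logpen_def)
qed (simp add: Vobj_def Vtau_def pen_def logpen_def)

lemma L2_set_subset_le: "finite B \<Longrightarrow> A \<subseteq> B \<Longrightarrow> L2_set f A \<le> L2_set f B"
  unfolding L2_set_def by (intro real_sqrt_le_mono sum_mono2) auto

lemma sum_abs_le_sqrt_card_norm:
  "(\<Sum>j\<in>A. \<bar>x$j\<bar>) \<le> sqrt (real (card A)) * norm (x :: real^'p)"
proof -
  have "(\<Sum>j\<in>A. \<bar>x$j\<bar>) \<le> L2_set (\<lambda>j. x$j) A * L2_set (\<lambda>_. 1) A"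
    using L2_set_mult_ineq[of "\<lambda>j. x$j" "\<lambda>_. 1" A] by simp
  also have "\<dots> \<le> L2_set (\<lambda>j. x$j) UNIV * sqrt (real (card A))"
    by (intro mult_mono L2_set_subset_le) (simp_all add: L2_set_constant)
  also have "L2_set (\<lambda>j. x$j) UNIV = norm x"
    by (simp add: norm_vec_def L2_set_def)
  finally show ?thesis by (simp add: mult.commute)
qed

text \<open>Coordinatewise part: only coordinates in supp beta can make the penalty drop.\<close>
lemma coordinate_penalty_drop:
  assumes tau: "0 \<le> \<tau>" "\<tau> < 1" and S: "supp \<beta> \<noteq> {}"
  shows "(\<Sum>j\<in>UNIV. logpen \<tau> \<bar>\<beta>$j\<bar>) - (\<Sum>j\<in>UNIV. logpen \<tau> \<bar>bhat$j\<bar>)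
           \<le> slope \<tau> \<beta> bhat * sqrt (real (card (supp \<beta>))) * norm (bhat - \<beta>)"
proof -
  define C where "C = slope \<tau> \<beta> bhat"
  have C: "0 \<le> C" unfolding C_def using slope_nonneg[OF tau S] .
  have drop: "logpen \<tau> \<bar>\<beta>$j\<bar> - logpen \<tau> \<bar>bhat$j\<bar>
                \<le> (if j \<in> supp \<beta> then C * \<bar>(bhat - \<beta>)$j\<bar> else 0)" for j
  proof (cases "j \<in> supp \<beta>")
    case True
    have "logpen \<tau> \<bar>\<beta>$j\<bar> - logpen \<tau> \<bar>bhat$j\<bar> \<le> C * \<bar>\<bar>\<beta>$j\<bar> - \<bar>bhat$j\<bar>\<bar>"
      unfolding C_def using min_abs_le[OF True]
      by (intro logpen_drop_slope[OF tau S]) (auto simp: supp_def)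
    also have "\<dots> \<le> C * \<bar>(bhat - \<beta>)$j\<bar>"
      using C by (intro mult_left_mono) auto
    finally show ?thesis using True by simp
  next
    case False
    then show ?thesis using logpen_nonneg[OF tau(1), of "\<bar>bhat$j\<bar>"] by (simp add: supp_def)
  qed
  have "(\<Sum>j\<in>UNIV. logpen \<tau> \<bar>\<beta>$j\<bar>) - (\<Sum>j\<in>UNIV. logpen \<tau> \<bar>bhat$j\<bar>)
          \<le> (\<Sum>j\<in>UNIV. if j \<in> supp \<beta> then C * \<bar>(bhat - \<beta>)$j\<bar> else 0)"
    unfolding sum_subtractf[symmetric] by (intro sum_mono drop)
  also have "\<dots> = C * (\<Sum>j\<in>supp \<beta>. \<bar>(bhat - \<beta>)$j\<bar>)"
    by (simp add: sum.If_cases sum_distrib_left)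
  also have "\<dots> \<le> C * (sqrt (real (card (supp \<beta>))) * norm (bhat - \<beta>))"
    using C by (intro mult_left_mono sum_abs_le_sqrt_card_norm)
  finally show ?thesis by (simp add: C_def mult.assoc)
qed

lemma active_groups_weighted_norm:
  assumes groups: "is_group_partition \<G>"
  shows "(\<Sum>G\<in>{G\<in>\<G>. group_norm \<beta> G \<noteq> 0}. sqrt (real (card G)) * group_norm d G) \<le> sqrt (real (qR \<G> \<beta>)) * norm d"
proof -
  define R where "R = {G\<in>\<G>. group_norm \<beta> G \<noteq> 0}"
  have fin: "finite \<G>" by (rule finite_subset[OF subset_UNIV]) simp
  have "(\<Sum>G\<in>R. sqrt (real (card G)) * group_norm d G)
          \<le> L2_set (\<lambda>G. sqrt (real (card G))) R * L2_set (\<lambda>G. group_norm d G) R"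
    using L2_set_mult_ineq[of "\<lambda>G. sqrt (real (card G))" "\<lambda>G. group_norm d G" R]
    by (simp add: group_norm_nonneg)
  also have "L2_set (\<lambda>G. sqrt (real (card G))) R = sqrt (real (qR \<G> \<beta>))"
    by (simp add: L2_set_def qR_eq_sum_card[OF groups] R_def)
  also have "L2_set (\<lambda>G. group_norm d G) R \<le> L2_set (\<lambda>G. group_norm d G) \<G>"
    using fin by (intro L2_set_subset_le) (auto simp: R_def)
  also have "\<dots> = norm d"
    using sum_group_norm_sq[OF groups, of d] by (simp add: L2_set_def)
  finally show ?thesis by (simp add: R_def mult_left_mono)
qed

text \<open>Groupwise part: only active groups can make the penalty drop, each by at most
  the slope times the group norm of d.\<close>
lemma group_penalty_drop:
  assumes groups: "is_group_partition \<G>" and tau: "0 \<le> \<tau>" "\<tau> < 1" and S: "supp \<beta> \<noteq> {}"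
  shows "(\<Sum>G\<in>\<G>. sqrt (real (card G)) * logpen \<tau> (group_norm \<beta> G))
           - (\<Sum>G\<in>\<G>. sqrt (real (card G)) * logpen \<tau> (group_norm bhat G))
         \<le> slope \<tau> \<beta> bhat * sqrt (real (qR \<G> \<beta>)) * norm (bhat - \<beta>)"
proof -
  define C where "C = slope \<tau> \<beta> bhat"
  define R where "R = {G\<in>\<G>. group_norm \<beta> G \<noteq> 0}"
  have C: "0 \<le> C" unfolding C_def using slope_nonneg[OF tau S] .
  have fin: "finite \<G>" by (rule finite_subset[OF subset_UNIV]) simp
  have drop: "sqrt (real (card G)) * (logpen \<tau> (group_norm \<beta> G) - logpen \<tau> (group_norm bhat G))
        \<le> (if G \<in> R then sqrt (real (card G)) * (C * group_norm (bhat - \<beta>) G) else 0)"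
    if G: "G \<in> \<G>" for G
  proof (cases "G \<in> R")
    case True
    then obtain j where j: "j \<in> G" "\<beta>$j \<noteq> 0" by (auto simp: R_def group_norm_eq_0_iff)
    have big: "min_abs \<beta> \<le> group_norm \<beta> G"
      using min_abs_le[of j \<beta>] abs_le_group_norm[OF j(1), of \<beta>] j by (auto simp: supp_def)
    have dom: "\<exists>k\<in>supp bhat. \<bar>bhat$k\<bar> \<le> group_norm bhat G" if "group_norm bhat G \<noteq> 0"
      using that abs_le_group_norm[of _ G bhat] by (force simp: group_norm_eq_0_iff supp_def)
    have "logpen \<tau> (group_norm \<beta> G) - logpen \<tau> (group_norm bhat G)
            \<le> C * \<bar>group_norm \<beta> G - group_norm bhat G\<bar>"
      unfolding C_def by (rule logpen_drop_slope[OF tau S big group_norm_nonneg dom])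
    also have "\<dots> \<le> C * group_norm (bhat - \<beta>) G"
      using C group_norm_diff_le by (intro mult_left_mono) auto
    finally show ?thesis using True by (simp add: mult_left_mono)
  next
    case False
    then have "group_norm \<beta> G = 0" using G by (simp add: R_def)
    then show ?thesis
      using False logpen_nonneg[OF tau(1) group_norm_nonneg, of bhat G]
      by (simp add: mult_nonneg_nonpos)
  qed
  have "(\<Sum>G\<in>\<G>. sqrt (real (card G)) * logpen \<tau> (group_norm \<beta> G))
          - (\<Sum>G\<in>\<G>. sqrt (real (card G)) * logpen \<tau> (group_norm bhat G))
        \<le> (\<Sum>G\<in>\<G>. if G \<in> R then sqrt (real (card G)) * (C * group_norm (bhat - \<beta>) G) else 0)"
    unfolding sum_subtractf[symmetric] right_diff_distrib[symmetric] by (intro sum_mono drop)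
  also have "\<dots> = C * (\<Sum>G\<in>R. sqrt (real (card G)) * group_norm (bhat - \<beta>) G)"
    using fin by (simp add: sum.If_cases R_def Int_def sum_distrib_left algebra_simps)
  also have "\<dots> \<le> C * (sqrt (real (qR \<G> \<beta>)) * norm (bhat - \<beta>))"
    unfolding R_def using C by (intro mult_left_mono active_groups_weighted_norm[OF groups])
  finally show ?thesis by (simp add: C_def mult.assoc)
qed

lemma penalty_drop:
  assumes groups: "is_group_partition \<G>" and tau: "0 \<le> \<tau>" "\<tau> < 1" and S: "supp \<beta> \<noteq> {}"
    and rho: "0 \<le> \<rho>1" "0 \<le> \<rho>2"
  shows "pen \<tau> \<G> \<rho>1 \<rho>2 \<beta> - pen \<tau> \<G> \<rho>1 \<rho>2 bhat
           \<le> (\<rho>1 + \<rho>2) * sqrt (real (qR \<G> \<beta>)) * slope \<tau> \<beta> bhat * norm (bhat - \<beta>)"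
proof -
  define B where "B = slope \<tau> \<beta> bhat * sqrt (real (qR \<G> \<beta>)) * norm (bhat - \<beta>)"
  have "slope \<tau> \<beta> bhat * sqrt (real (card (supp \<beta>))) * norm (bhat - \<beta>) \<le> B"
    unfolding B_def using slope_nonneg[OF tau S] card_supp_le_qR[OF groups, of \<beta>]
    by (intro mult_right_mono mult_left_mono) auto
  then have "(\<Sum>j\<in>UNIV. logpen \<tau> \<bar>\<beta>$j\<bar>) - (\<Sum>j\<in>UNIV. logpen \<tau> \<bar>bhat$j\<bar>) \<le> B"
    using coordinate_penalty_drop[OF tau S, of bhat] by linarith
  moreover have "(\<Sum>G\<in>\<G>. sqrt (real (card G)) * logpen \<tau> (group_norm \<beta> G))
           - (\<Sum>G\<in>\<G>. sqrt (real (card G)) * logpen \<tau> (group_norm bhat G)) \<le> B"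
    unfolding B_def by (rule group_penalty_drop[OF groups tau S])
  ultimately have "pen \<tau> \<G> \<rho>1 \<rho>2 \<beta> - pen \<tau> \<G> \<rho>1 \<rho>2 bhat \<le> \<rho>1 * B + \<rho>2 * B"
    unfolding pen_def using mult_left_mono[OF _ rho(1)] mult_left_mono[OF _ rho(2)]
    by (fastforce simp: right_diff_distrib intro: add_mono)
  then show ?thesis by (simp add: B_def algebra_simps)
qed

subsection \<open>The quadratic loss\<close>

lemma inner_matrix_vector: "(e::real^'n) \<bullet> (X *v d) = (transpose X *v e) \<bullet> (d::real^'p)"
  by (simp add: dot_lmul_matrix)

lemma norm_matrix_vector_sq: "(norm (X *v d))\<^sup>2 = d \<bullet> ((transpose X ** X) *v (d::real^'p))"
  by (simp add: power2_norm_eq_inner inner_matrix_vector matrix_vector_mul_assoc inner_commute)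

lemma kappa_le:
  fixes X :: "real^'p^'n" and d :: "real^'p"
  shows "real CARD('n) * kappa X * (norm d)\<^sup>2 \<le> (norm (X *v d))\<^sup>2"
proof (cases "d = 0")
  case False
  define Q where "Q = {w \<bullet> ((transpose X ** X) *v w) | w. norm w = 1}"
  define w where "w = (1 / norm d) *\<^sub>R d"
  have "norm w = 1" using False by (simp add: w_def)
  moreover have "bdd_below Q"
    by (rule bdd_belowI[of _ 0]) (auto simp: Q_def norm_matrix_vector_sq[symmetric])
  ultimately have "Inf Q \<le> w \<bullet> ((transpose X ** X) *v w)"
    unfolding Q_def by (intro cInf_lower) blast+
  also have "\<dots> = (norm (X *v w))\<^sup>2"
    by (simp add: norm_matrix_vector_sq)
  also have "\<dots> = (norm (X *v d) / norm d)\<^sup>2"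
    by (simp add: w_def matrix_vector_mult_scaleR divide_inverse mult.commute)
  also have "\<dots> = (norm (X *v d))\<^sup>2 / (norm d)\<^sup>2"
    by (rule power_divide)
  finally show ?thesis
    using False by (simp add: kappa_def Q_def field_simps)
qed simp

lemma basic_inequality:
  assumes "Vobj X y \<G> lam \<rho>1 \<rho>2 \<tau> bhat \<le> Vobj X y \<G> lam \<rho>1 \<rho>2 \<tau> \<beta>"
  shows "(norm (X *v (bhat - \<beta>)))\<^sup>2 + lam * (norm (bhat - \<beta>))\<^sup>2
           \<le> 2 * ((transpose X *v (y - X *v \<beta>)) \<bullet> (bhat - \<beta>)) - 2 * lam * (\<beta> \<bullet> (bhat - \<beta>))
             + (pen \<tau> \<G> \<rho>1 \<rho>2 \<beta> - pen \<tau> \<G> \<rho>1 \<rho>2 bhat)"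
proof -
  define d where "d = bhat - \<beta>"
  define e where "e = y - X *v \<beta>"
  have loss: "(norm (y - X *v bhat))\<^sup>2
                = (norm e)\<^sup>2 - 2 * ((transpose X *v e) \<bullet> d) + (norm (X *v d))\<^sup>2"
  proof -
    have "y - X *v bhat = e - X *v d"
      by (simp add: e_def d_def matrix_vector_right_distrib algebra_simps)
    then show ?thesis
      by (simp add: power2_norm_eq_inner inner_diff_left inner_diff_right inner_commute
                    inner_matrix_vector)
  qed
  have ridge: "(norm bhat)\<^sup>2 = (norm \<beta>)\<^sup>2 + 2 * (\<beta> \<bullet> d) + (norm d)\<^sup>2"
    by (simp add: d_def power2_norm_eq_inner inner_diff_left inner_diff_right inner_commute)
  show ?thesis
    using assms unfolding Vobj_eq_pen loss ridge d_def[symmetric] e_def[symmetric]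
    by (simp add: algebra_simps)
qed

lemma abs_le_supnorm: "\<bar>v$i\<bar> \<le> supnorm v"
  unfolding supnorm_def by (rule Max_ge) auto

lemma supnorm_nonneg: "0 \<le> supnorm v"
  using abs_le_supnorm[of v] abs_ge_zero order_trans by blast

lemma noise_term_le:
  fixes v d :: "real^'p"
  assumes "supp d \<subseteq> A \<union> B"
  shows "v \<bullet> d \<le> supnorm v * sqrt (real (card A) + real (card B)) * norm d"
proof -
  have w: "0 \<le> supnorm v" by (rule supnorm_nonneg)
  have "v \<bullet> d \<le> (\<Sum>j\<in>UNIV. supnorm v * \<bar>d$j\<bar>)"
    unfolding inner_vec_def
  proof (rule sum_mono)
    fix j
    have "v$j * d$j \<le> \<bar>v$j\<bar> * \<bar>d$j\<bar>" by (simp add: abs_mult[symmetric])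
    also have "\<dots> \<le> supnorm v * \<bar>d$j\<bar>" by (intro mult_right_mono abs_le_supnorm) simp
    finally show "v$j \<bullet> d$j \<le> supnorm v * \<bar>d$j\<bar>" by simp
  qed
  also have "\<dots> = supnorm v * (\<Sum>j\<in>A \<union> B. \<bar>d$j\<bar>)"
    unfolding sum_distrib_left[symmetric] using assms
    by (intro arg_cong[where f = "(*) _"] sum.mono_neutral_right) (auto simp: supp_def)
  also have "\<dots> \<le> supnorm v * (sqrt (real (card (A \<union> B))) * norm d)"
    using w by (intro mult_left_mono sum_abs_le_sqrt_card_norm)
  also have "\<dots> \<le> supnorm v * (sqrt (real (card A) + real (card B)) * norm d)"
    using w card_Un_le[of A B] by (intro mult_left_mono mult_right_mono) auto
  finally show ?thesis by (simp add: mult.assoc)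
qed

lemma ridge_term_le:
  fixes \<beta> d :: "real^'p"
  assumes S: "supp \<beta> \<noteq> {}"
  shows "- (\<beta> \<bullet> d) \<le> sqrt (real (card (supp \<beta>))) * max_abs \<beta> * norm d"
proof -
  define M where "M = max_abs \<beta>"
  have "(norm \<beta>)\<^sup>2 = (\<Sum>j\<in>UNIV. (\<beta>$j)\<^sup>2)"
    by (simp add: norm_vec_def L2_set_def sum_nonneg)
  also have "\<dots> = (\<Sum>j\<in>supp \<beta>. (\<beta>$j)\<^sup>2)"
    by (rule sum.mono_neutral_right) (auto simp: supp_def)
  also have "\<dots> \<le> (\<Sum>j\<in>supp \<beta>. M\<^sup>2)"
  proof (rule sum_mono)
    fix j assume "j \<in> supp \<beta>"
    then have "\<bar>\<beta>$j\<bar> \<le> M" by (simp add: M_def abs_le_max_abs)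
    then show "(\<beta>$j)\<^sup>2 \<le> M\<^sup>2" using power_mono[OF _ abs_ge_zero, of _ M 2] by simp
  qed
  also have "\<dots> = (sqrt (real (card (supp \<beta>))) * M)\<^sup>2"
    by (simp add: power_mult_distrib)
  finally have "(norm \<beta>)\<^sup>2 \<le> (sqrt (real (card (supp \<beta>))) * M)\<^sup>2" .
  then have norm_\<beta>: "norm \<beta> \<le> sqrt (real (card (supp \<beta>))) * M"
    by (rule power2_le_imp_le) (simp add: M_def max_abs_nonneg[OF S])
  have "- (\<beta> \<bullet> d) \<le> norm \<beta> * norm d"
    using norm_cauchy_schwarz[of "-\<beta>" d] by simp
  also have "\<dots> \<le> sqrt (real (card (supp \<beta>))) * M * norm d"
    using norm_\<beta> by (rule mult_right_mono) simp
  finally show ?thesis by (simp add: M_def)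
qed

lemma sqrt_sum_le:
  fixes s sh q :: real
  assumes s: "1 \<le> s" and sh: "0 \<le> sh" and q: "s \<le> q"
  shows "2 * sqrt (s + sh) \<le> sqrt q * (4 * (1 + sqrt (sh / (4 * s))))"
proof -
  have "sqrt (s + sh) \<le> sqrt s + sqrt sh"
    using s sh by (intro sqrt_add_le_add_sqrt) auto
  also have "sqrt sh = 2 * sqrt s * sqrt (sh / (4 * s))"
    using s by (simp add: real_sqrt_divide real_sqrt_mult)
  also have "sqrt s + 2 * sqrt s * sqrt (sh / (4 * s)) \<le> sqrt q * (1 + 2 * sqrt (sh / (4 * s)))"
    using mult_right_mono[of "sqrt s" "sqrt q" "1 + 2 * sqrt (sh / (4 * s))"] s sh q
    by (simp add: algebra_simps)
  finally have le: "sqrt (s + sh) \<le> sqrt q * (1 + 2 * sqrt (sh / (4 * s)))" .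
  have "sqrt q * (4 * (1 + sqrt (sh / (4 * s)))) - 2 * (sqrt q * (1 + 2 * sqrt (sh / (4 * s))))
          = 2 * sqrt q"
    by (simp add: algebra_simps)
  moreover have "0 \<le> sqrt q" using s q by simp
  ultimately show ?thesis using le by linarith
qed

lemma error_from_quadratic:
  fixes x \<kappa> lam n w s sh q M C \<rho> :: real
  assumes n: "0 < n" and den: "0 < \<kappa> + lam / n" and x: "0 \<le> x"
    and quad: "(n * \<kappa> + lam) * x\<^sup>2
                 \<le> (2 * w * sqrt (s + sh) + 2 * lam * sqrt s * M + \<rho> * sqrt q * C) * x"
    and nonneg: "0 \<le> w" "0 \<le> lam" "0 \<le> M" "0 \<le> C" "0 \<le> \<rho>"
    and s: "1 \<le> s" "0 \<le> sh" "s \<le> q"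
  shows "x \<le> sqrt q / (\<kappa> + lam / n)
               * (4 * (1 + sqrt (sh / (4 * s))) * w / n + 2 * M * lam / n + C * \<rho> / n)"
proof -
  define A where "A = 2 * w * sqrt (s + sh) + 2 * lam * sqrt s * M + \<rho> * sqrt q * C"
  define B where "B = 4 * (1 + sqrt (sh / (4 * s))) * w / n + 2 * M * lam / n + C * \<rho> / n"
  have c_eq: "n * \<kappa> + lam = n * (\<kappa> + lam / n)" using n by (simp add: field_simps)
  have c: "0 < n * \<kappa> + lam" unfolding c_eq using n den by simp
  have A0: "0 \<le> A" unfolding A_def using nonneg s by simp
  have "x \<le> A / (n * \<kappa> + lam)"
  proof (cases "x = 0")
    case False
    then have "(n * \<kappa> + lam) * x \<le> A"
      using quad x by (simp add: A_def power2_eq_square mult.assoc[symmetric])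
    then show ?thesis using c by (simp add: field_simps)
  qed (use A0 c in simp)
  also have "A \<le> n * (sqrt q * B)"
  proof -
    have "2 * w * sqrt (s + sh) \<le> sqrt q * (4 * (1 + sqrt (sh / (4 * s)))) * w"
      using mult_right_mono[OF sqrt_sum_le[OF s] nonneg(1)] by (simp add: algebra_simps)
    moreover have "2 * lam * sqrt s * M \<le> 2 * lam * sqrt q * M"
      using nonneg s by (intro mult_right_mono mult_left_mono) auto
    ultimately show ?thesis
      unfolding A_def B_def using n by (simp add: algebra_simps add_divide_distrib)
  qed
  then have "A / (n * \<kappa> + lam) \<le> n * (sqrt q * B) / (n * \<kappa> + lam)"
    using c by (intro divide_right_mono) auto
  also have "\<dots> = sqrt q / (\<kappa> + lam / n) * B"
    unfolding c_eq using n by simp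
  finally show ?thesis by (simp add: B_def)
qed

theorem theorem1:
  fixes X :: "real^'p^'n" and y :: "real^'n" and \<beta> bhat :: "real^'p"
    and \<G> :: "'p set set" and lam \<rho>1 \<rho>2 \<tau> :: real
  assumes groups: "is_group_partition \<G>"
    and s_pos: "card (supp \<beta>) \<ge> 1"
    and "lam \<ge> 0" and "\<rho>1 \<ge> 0" and "\<rho>2 \<ge> 0"
    and "0 \<le> \<tau>" and "\<tau> < 1"
    and minimizer: "\<forall>b. Vobj X y \<G> lam \<rho>1 \<rho>2 \<tau> bhat \<le> Vobj X y \<G> lam \<rho>1 \<rho>2 \<tau> b"
    and "1 \<le> max (qR \<G> \<beta>) (card (supp bhat))"
    and "max (qR \<G> \<beta>) (card (supp bhat)) \<le> CARD('p)"
    and "kappa X + lam / real CARD('n) > 0"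
  shows "norm (bhat - \<beta>) \<le>
    sqrt (real (qR \<G> \<beta>)) / (kappa X + lam / real CARD('n)) *
      ( 4 * (1 + sqrt (real (card (supp bhat)) / (4 * real (card (supp \<beta>)))))
            * supnorm (transpose X *v (y - X *v \<beta>)) / real CARD('n)
      + 2 * Max ((\<lambda>j. \<bar>\<beta>$j\<bar>) ` supp \<beta>) * lam / real CARD('n)
      + ( (2 * (if supp bhat = {} then 0 else 1 / Min ((\<lambda>j. \<bar>bhat$j\<bar>) ` supp bhat)) + 1)
            * (if \<tau> = 0 then 0 else 1 / ln (1 / \<tau>))
          + 1 / Min ((\<lambda>j. \<bar>\<beta>$j\<bar>) ` supp \<beta>))
        * (\<rho>1 + \<rho>2) / real CARD('n))"
proof -
  note nonneg = \<open>lam \<ge> 0\<close> \<open>\<rho>1 \<ge> 0\<close> \<open>\<rho>2 \<ge> 0\<close> and tau = \<open>0 \<le> \<tau>\<close> \<open>\<tau> < 1\<close>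
  define d where "d = bhat - \<beta>"
  define v where "v = transpose X *v (y - X *v \<beta>)"
  define s where "s = real (card (supp \<beta>))"
  have S: "supp \<beta> \<noteq> {}" using s_pos by auto
  have basic: "(norm (X *v d))\<^sup>2 + lam * (norm d)\<^sup>2
      \<le> 2 * (v \<bullet> d) - 2 * lam * (\<beta> \<bullet> d) + (pen \<tau> \<G> \<rho>1 \<rho>2 \<beta> - pen \<tau> \<G> \<rho>1 \<rho>2 bhat)"
    unfolding d_def v_def using minimizer by (intro basic_inequality) blast
  have noise: "v \<bullet> d \<le> supnorm v * sqrt (s + real (card (supp bhat))) * norm d"
    unfolding s_def d_def using supp_diff_subset[of bhat \<beta>] by (intro noise_term_le) blast
  have ridge: "- (lam * (\<beta> \<bullet> d)) \<le> lam * (sqrt s * max_abs \<beta> * norm d)"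
    using mult_left_mono[OF ridge_term_le[OF S] nonneg(1)] by (simp add: s_def)
  have "(real CARD('n) * kappa X + lam) * (norm d)\<^sup>2
      \<le> (2 * supnorm v * sqrt (s + real (card (supp bhat))) + 2 * lam * sqrt s * max_abs \<beta>
          + (\<rho>1 + \<rho>2) * sqrt (real (qR \<G> \<beta>)) * slope \<tau> \<beta> bhat) * norm d"
    using basic noise ridge kappa_le[of X d] penalty_drop[OF groups tau S nonneg(2,3), of bhat]
    by (simp add: d_def algebra_simps)
  then have "norm d \<le> sqrt (real (qR \<G> \<beta>)) / (kappa X + lam / real CARD('n)) *
      (4 * (1 + sqrt (real (card (supp bhat)) / (4 * s))) * supnorm v / real CARD('n)
       + 2 * max_abs \<beta> * lam / real CARD('n) + slope \<tau> \<beta> bhat * (\<rho>1 + \<rho>2) / real CARD('n))"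
    using \<open>kappa X + lam / real CARD('n) > 0\<close> s_pos card_supp_le_qR[OF groups, of \<beta>]
      supnorm_nonneg[of v] max_abs_nonneg[OF S] slope_nonneg[OF tau S] nonneg
    by (intro error_from_quadratic) (simp_all add: s_def)
  then show ?thesis unfolding d_def v_def s_def slope_def min_abs_def max_abs_def .
qed

end
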